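(* The Minimax SCC $M$ coincides with the Copeland SCC $Cop$ (as functions on $\mathcal P$) if and only if $n=2$ or $(h,n)=(3,3)$.
   Context: Let $n,h\ge2$, $N=\{1,\dots,n\}$, $H=\{1,\dots,h\}$; $\mathcal P$ is the set of $h$-tuples $p$ of linear orders on $N$; $x>_{p_i}y$ means $x\neq y$ and $p_i$ ranks $x$ above $y$. Let $\mu_0=\lceil(h+1)/2\rceil$ and $x>^p_{\mu_0}y$ mean $|\{i: x>_{p_i}y\}|\ge\mu_0$. $M(p)=\mathrm{argmin}_{x\in N}\max_{y\neq x}|\{i: y>_{p_i}x\}|$ and $Cop(p)=\mathrm{argmax}_{x\in N}\big(|\{y: x>^p_{\mu_0}y\}|-|\{y: y>^p_{\mu_0}x\}|\big)$. *)

theory Defs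
  imports Complex_Main
begin

text \<open>A linear order on N = {1..n} is a relation R with (x,y) in R meaning
 "x is ranked at or above y".  A profile assigns to each individual i in {1..h}
 a linear order on {1..n}.\<close>

definition profiles :: "nat \<Rightarrow> nat \<Rightarrow> (nat \<Rightarrow> nat rel) set" where
  "profiles n h = {p. \<forall>i\<in>{1..h}. linear_order_on {1..n} (p i)}"

definition prefers :: "(nat \<Rightarrow> nat rel) \<Rightarrow> nat \<Rightarrow> nat \<Rightarrow> nat \<Rightarrow> bool" where
  "prefers p i x y \<longleftrightarrow> x \<noteq> y \<and> (x, y) \<in> p i"

definition votes :: "nat \<Rightarrow> (nat \<Rightarrow> nat rel) \<Rightarrow> nat \<Rightarrow> nat \<Rightarrow> nat" where
  "votes h p x y = card {i\<in>{1..h}. prefers p i x y}"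

definition mu0 :: "nat \<Rightarrow> nat" where
  "mu0 h = nat \<lceil>(real h + 1) / 2\<rceil>"

definition maj :: "nat \<Rightarrow> (nat \<Rightarrow> nat rel) \<Rightarrow> nat \<Rightarrow> nat \<Rightarrow> bool" where
  "maj h p x y \<longleftrightarrow> votes h p x y \<ge> mu0 h"

definition minimax_score :: "nat \<Rightarrow> nat \<Rightarrow> (nat \<Rightarrow> nat rel) \<Rightarrow> nat \<Rightarrow> nat" where
  "minimax_score n h p x = Max {votes h p y x | y. y \<in> {1..n} \<and> y \<noteq> x}"

definition Minimax :: "nat \<Rightarrow> nat \<Rightarrow> (nat \<Rightarrow> nat rel) \<Rightarrow> nat set" where
  "Minimax n h p = {x\<in>{1..n}. \<forall>z\<in>{1..n}. minimax_score n h p x \<le> minimax_score n h p z}"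

definition copeland_score :: "nat \<Rightarrow> nat \<Rightarrow> (nat \<Rightarrow> nat rel) \<Rightarrow> nat \<Rightarrow> int" where
  "copeland_score n h p x =
     int (card {y\<in>{1..n}. maj h p x y}) - int (card {y\<in>{1..n}. maj h p y x})"

definition Copeland :: "nat \<Rightarrow> nat \<Rightarrow> (nat \<Rightarrow> nat rel) \<Rightarrow> nat set" where
  "Copeland n h p = {x\<in>{1..n}. \<forall>z\<in>{1..n}. copeland_score n h p z \<le> copeland_score n h p x}"

end

theory Submission
  imports Defs
begin

text \<open>For two alternatives both rules elect the alternative with more votes in the single pairwise
  contest (both of them on a tie). For three voters and three alternatives every contest is won
  2:1 or 3:0, and a finite check over the three pairwise vote counts, constrained only by the
  transitivity of the individual ballots, shows that the rules agree.

  In every other case an explicit profile separates them; the alternatives beyond 3 (resp. 4)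
  are ranked last by everybody and only add the same number of wins to the others.
  For even h, half of the voters rank 1, 2, 3 and half rank 3, 1, 2: then 1 beats 2 while 3 ties
  with both, so 3 is a Minimax winner but has a lower Copeland score than 1. For odd h \<ge> 5 a
  lone voter 2, 3, 1 turns this into a majority cycle 1 \<rightarrow> 2 \<rightarrow> 3 \<rightarrow> 1 in which all three
  alternatives have the same Copeland score, but 2 loses to 1 by a much larger margin than 1 and 3
  lose. For h = 3 the ballots 1, 2, 3, 4 / 2, 3, 1, 4 / 4, 3, 1, 2 form a cycle on 1, 2, 3 whose
  members each lose 2:1 like 4, which loses to all three of them: 4 is a Minimax but not a
  Copeland winner.\<close>

lemma mu0_eq: "mu0 h = h div 2 + 1"
proof -
  have "real h = 2 * real (h div 2) + real (h mod 2)"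
    by (metis of_nat_add of_nat_mult of_nat_numeral div_mult_mod_eq mult.commute)
  moreover have "h mod 2 = 0 \<or> h mod 2 = 1" by auto
  ultimately have "\<lceil>(real h + 1) / 2\<rceil> = int (h div 2 + 1)"
    by (intro ceiling_unique) auto
  then show ?thesis unfolding mu0_def by simp
qed

lemma votes_le: "votes h p x y \<le> h"
proof -
  have "votes h p x y \<le> card {1..h}" unfolding votes_def by (intro card_mono) auto
  then show ?thesis by simp
qed

lemma votes_self: "votes h p x x = 0"
  unfolding votes_def prefers_def by simp

lemma linear_order_on_profile:
  "p \<in> profiles n h \<Longrightarrow> i \<in> {1..h} \<Longrightarrow> linear_order_on {1..n} (p i)"
  unfolding profiles_def by auto

lemma prefers_total:
  assumes "p \<in> profiles n h" "i \<in> {1..h}" "x \<in> {1..n}" "y \<in> {1..n}" "x \<noteq> y"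
  shows "prefers p i x y \<or> prefers p i y x"
  using linear_order_on_profile[OF assms(1,2)] assms(3-5)
  unfolding linear_order_on_def total_on_def prefers_def by blast

lemma prefers_asym:
  assumes "p \<in> profiles n h" "i \<in> {1..h}" "prefers p i x y"
  shows "\<not> prefers p i y x"
  using linear_order_on_profile[OF assms(1,2)] assms(3)
  unfolding linear_order_on_def partial_order_on_def antisym_def prefers_def by blast

lemma prefers_trans:
  assumes "p \<in> profiles n h" "i \<in> {1..h}" "prefers p i x y" "prefers p i y z" "x \<noteq> z"
  shows "prefers p i x z"
  using linear_order_on_profile[OF assms(1,2)] assms(3-5)
  unfolding linear_order_on_def partial_order_on_def preorder_on_def trans_def prefers_def by blast

lemma votes_add_votes_swap:
  assumes p: "p \<in> profiles n h" and "x \<in> {1..n}" "y \<in> {1..n}" "x \<noteq> y"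
  shows "votes h p x y + votes h p y x = h"
proof -
  let ?A = "{i\<in>{1..h}. prefers p i x y}" and ?B = "{i\<in>{1..h}. prefers p i y x}"
  have "?A \<union> ?B = {1..h}" using prefers_total[OF p _ assms(2-4)] by fastforce
  moreover have "?A \<inter> ?B = {}" using prefers_asym[OF p] by auto
  ultimately have "card ?A + card ?B = card {1..h}"
    by (metis card_Un_disjoint finite_Un finite_atLeastAtMost)
  then show ?thesis unfolding votes_def by simp
qed

lemma votes_triangle:
  assumes p: "p \<in> profiles n h" and "x \<noteq> z"
  shows "votes h p x y + votes h p y z \<le> h + votes h p x z"
proof -
  let ?A = "{i\<in>{1..h}. prefers p i x y}" and ?B = "{i\<in>{1..h}. prefers p i y z}"
  have "?A \<inter> ?B \<subseteq> {i\<in>{1..h}. prefers p i x z}" using prefers_trans[OF p] assms(2) by auto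
  then have "card (?A \<inter> ?B) \<le> votes h p x z" unfolding votes_def by (intro card_mono) auto
  moreover have "card (?A \<union> ?B) \<le> card {1..h}" by (intro card_mono) auto
  moreover have "card (?A \<union> ?B) + card (?A \<inter> ?B) = card ?A + card ?B" using card_Un_Int[of ?A ?B] by simp
  ultimately show ?thesis unfolding votes_def by simp
qed

lemma maj_iff_votes_less:
  assumes "p \<in> profiles n h" "x \<in> {1..n}" "y \<in> {1..n}" "x \<noteq> y"
  shows "maj h p x y \<longleftrightarrow> votes h p y x < votes h p x y"
  using votes_add_votes_swap[OF assms] unfolding maj_def mu0_eq by linarith

lemma maj_irrefl: "\<not> maj h p x x"
  unfolding maj_def votes_self mu0_eq by simp

lemma maj_asym:
  assumes "p \<in> profiles n h" "x \<in> {1..n}" "y \<in> {1..n}" "maj h p x y"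
  shows "\<not> maj h p y x"
  using assms maj_iff_votes_less[OF assms(1)] maj_irrefl by (cases "x = y") auto

lemma minimax_score_eq_Max:
  "minimax_score n h p x = Max ((\<lambda>y. votes h p y x) ` ({1..n} - {x}))"
proof -
  have "{votes h p y x | y. y \<in> {1..n} \<and> y \<noteq> x} = (\<lambda>y. votes h p y x) ` ({1..n} - {x})"
    by auto
  then show ?thesis unfolding minimax_score_def by simp
qed

lemma minimax_score_le:
  assumes "n \<ge> 2" "x \<in> {1..n}" "\<And>y. y \<in> {1..n} \<Longrightarrow> y \<noteq> x \<Longrightarrow> votes h p y x \<le> B"
  shows "minimax_score n h p x \<le> B"
proof -
  have "{1..n} - {x} \<noteq> {}"
    using assms(1,2) by (cases "x = 1") (auto dest: subset_singletonD)
  then show ?thesis unfolding minimax_score_eq_Max using assms(3) by simp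
qed

lemma votes_le_minimax_score:
  "y \<in> {1..n} \<Longrightarrow> y \<noteq> x \<Longrightarrow> votes h p y x \<le> minimax_score n h p x"
  unfolding minimax_score_eq_Max by (intro Max_ge) auto

lemma minimax_score_ge:
  "y \<in> {1..n} \<Longrightarrow> y \<noteq> x \<Longrightarrow> B \<le> votes h p y x \<Longrightarrow> B \<le> minimax_score n h p x"
  using votes_le_minimax_score le_trans by blast

lemma copeland_score_ge:
  assumes "W \<subseteq> {y\<in>{1..n}. maj h p z y}" "{y\<in>{1..n}. maj h p y z} \<subseteq> L" "finite L"
  shows "int (card W) - int (card L) \<le> copeland_score n h p z"
proof -
  have "card W \<le> card {y\<in>{1..n}. maj h p z y}" using assms(1) by (intro card_mono) auto
  moreover have "card {y\<in>{1..n}. maj h p y z} \<le> card L" using assms(2,3) by (intro card_mono)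
  ultimately show ?thesis unfolding copeland_score_def by linarith
qed

lemma copeland_score_le:
  assumes "{y\<in>{1..n}. maj h p z y} \<subseteq> W" "L \<subseteq> {y\<in>{1..n}. maj h p y z}" "finite W"
  shows "copeland_score n h p z \<le> int (card W) - int (card L)"
proof -
  have "card {y\<in>{1..n}. maj h p z y} \<le> card W" using assms(1,3) by (intro card_mono)
  moreover have "card L \<le> card {y\<in>{1..n}. maj h p y z}" using assms(2) by (intro card_mono) auto
  ultimately show ?thesis unfolding copeland_score_def by linarith
qed

lemma copeland_score_eq_sum:
  "copeland_score n h p x =
     (\<Sum>y\<in>{1..n}. (if maj h p x y then 1 else 0) - (if maj h p y x then 1 else 0))"
  unfolding copeland_score_def sum_subtractf
  by (simp add: sum.inter_filter[symmetric] of_nat_sum[symmetric])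

lemma Minimax_eq_Copeland_two_alternatives:
  assumes p: "p \<in> profiles 2 h"
  shows "Minimax 2 h p = Copeland 2 h p"
proof -
  have alts: "{1..2::nat} = {1, 2}" by auto
  have "maj h p 1 2 \<longleftrightarrow> votes h p 2 1 < votes h p 1 2"
    and "maj h p 2 1 \<longleftrightarrow> votes h p 1 2 < votes h p 2 1"
    using maj_iff_votes_less[OF p] by auto
  then show ?thesis
    unfolding Minimax_def Copeland_def minimax_score_eq_Max copeland_score_eq_sum alts
    by (auto simp: maj_irrefl insert_Diff_if)
qed

text \<open>Here a, b, c stand for the votes for 1 over 2, 1 over 3 and 2 over 3 among three voters,
  the inequalities are instances of votes_triangle, and M, C are the resulting Minimax and
  Copeland scores.\<close>

lemma minimax_copeland_table_three_alternatives:
  fixes a b c :: nat and M :: "nat \<Rightarrow> nat" and C :: "nat \<Rightarrow> int"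
  assumes "a \<le> 3" "b \<le> 3" "c \<le> 3"
    and "a + c \<le> 3 + b" "b + (3 - c) \<le> 3 + a" "(3 - a) + b \<le> 3 + c"
    "c + (3 - b) \<le> 3 + (3 - a)" "(3 - b) + a \<le> 3 + (3 - c)" "(3 - c) + (3 - a) \<le> 3 + (3 - b)"
    and "M 1 = max (3 - a) (3 - b)" "M 2 = max a (3 - c)" "M 3 = max b c"
    and "C 1 = w a + w b - w (3 - a) - w (3 - b)" "C 2 = w (3 - a) + w c - w a - w (3 - c)"
    "C 3 = w (3 - b) + w (3 - c) - w b - w c"
    and "\<And>v. w v = (if 3 - v < v then 1 else 0)"
  shows "\<forall>x\<in>{1, 2, 3}. (\<forall>z\<in>{1, 2, 3}. M x \<le> M z) \<longleftrightarrow> (\<forall>z\<in>{1, 2, 3}. C z \<le> C x)"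
proof -
  have "a = 0 \<or> a = 1 \<or> a = 2 \<or> a = 3" "b = 0 \<or> b = 1 \<or> b = 2 \<or> b = 3"
    "c = 0 \<or> c = 1 \<or> c = 2 \<or> c = 3" using assms(1-3) by auto
  then show ?thesis using assms(4-9) unfolding ball_simps assms(10-16) by (elim disjE; simp)
qed

lemma Minimax_eq_Copeland_three_voters_three_alternatives:
  assumes p: "p \<in> profiles 3 3"
  shows "Minimax 3 3 p = Copeland 3 3 p"
proof -
  define a b c where "a = votes 3 p 1 2" and "b = votes 3 p 1 3" and "c = votes 3 p 2 3"
  have swap: "votes 3 p 2 1 = 3 - a" "votes 3 p 3 1 = 3 - b" "votes 3 p 3 2 = 3 - c"
    unfolding a_def b_def c_def using votes_add_votes_swap[OF p, of 1 2]
      votes_add_votes_swap[OF p, of 1 3] votes_add_votes_swap[OF p, of 2 3] by auto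
  have bounds: "a \<le> 3" "b \<le> 3" "c \<le> 3" unfolding a_def b_def c_def by (simp_all add: votes_le)
  have "votes 3 p x y + votes 3 p y z \<le> 3 + votes 3 p x z" if "x \<noteq> z" for x y z
    using votes_triangle[OF p that] by simp
  from this[of 1 2 3] this[of 1 3 2] this[of 2 1 3] this[of 2 3 1] this[of 3 1 2] this[of 3 2 1]
  have triangle: "a + c \<le> 3 + b" "b + (3 - c) \<le> 3 + a" "(3 - a) + b \<le> 3 + c"
    "c + (3 - b) \<le> 3 + (3 - a)" "(3 - b) + a \<le> 3 + (3 - c)" "(3 - c) + (3 - a) \<le> 3 + (3 - b)"
    unfolding swap a_def[symmetric] b_def[symmetric] c_def[symmetric] by simp_all
  have "maj 3 p x y \<longleftrightarrow> votes 3 p y x < votes 3 p x y" if "x \<in> {1..3}" "y \<in> {1..3}" "x \<noteq> y" for x y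
    using maj_iff_votes_less[OF p that] .
  from this[of 1 2] this[of 2 1] this[of 1 3] this[of 3 1] this[of 2 3] this[of 3 2]
  have maj: "maj 3 p 1 2 \<longleftrightarrow> 3 - a < a" "maj 3 p 2 1 \<longleftrightarrow> a < 3 - a"
    "maj 3 p 1 3 \<longleftrightarrow> 3 - b < b" "maj 3 p 3 1 \<longleftrightarrow> b < 3 - b"
    "maj 3 p 2 3 \<longleftrightarrow> 3 - c < c" "maj 3 p 3 2 \<longleftrightarrow> c < 3 - c"
    unfolding swap a_def[symmetric] b_def[symmetric] c_def[symmetric] by simp_all
  have alts: "{1..3::nat} = {1, 2, 3}" by auto
  have "{1..3} - {1::nat} = {2, 3}" "{1..3} - {2::nat} = {1, 3}" "{1..3} - {3::nat} = {1, 2}" by auto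
  then have ms: "minimax_score 3 3 p 1 = max (3 - a) (3 - b)" "minimax_score 3 3 p 2 = max a (3 - c)"
    "minimax_score 3 3 p 3 = max b c"
    unfolding minimax_score_eq_Max by (simp_all add: swap del: One_nat_def flip: a_def b_def c_def)
  define w where "w v = (if 3 - v < v then 1 else (0::int))" for v :: nat
  have cs: "copeland_score 3 3 p 1 = w a + w b - w (3 - a) - w (3 - b)"
    "copeland_score 3 3 p 2 = w (3 - a) + w c - w a - w (3 - c)"
    "copeland_score 3 3 p 3 = w (3 - b) + w (3 - c) - w b - w c"
    unfolding copeland_score_eq_sum alts using bounds
    by (simp_all add: maj maj_irrefl w_def del: One_nat_def)
  show ?thesis
    unfolding Minimax_def Copeland_def alts
    using minimax_copeland_table_three_alternatives[OF bounds triangle ms cs w_def] by blast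
qed

text \<open>r i x is the position of x on the ballot of voter i (smaller is better).\<close>

definition profile_of_ranks :: "nat \<Rightarrow> (nat \<Rightarrow> nat \<Rightarrow> nat) \<Rightarrow> nat \<Rightarrow> nat rel" where
  "profile_of_ranks n r i = {(x, y). x \<in> {1..n} \<and> y \<in> {1..n} \<and> r i x \<le> r i y}"

lemma profile_of_ranks_in_profiles: "(\<And>i. inj (r i)) \<Longrightarrow> profile_of_ranks n r \<in> profiles n h"
  unfolding profiles_def profile_of_ranks_def linear_order_on_def partial_order_on_def
    preorder_on_def refl_on_def trans_def antisym_def total_on_def
  by (auto simp: inj_eq)

lemma prefers_profile_of_ranks:
  "inj (r i) \<Longrightarrow> prefers (profile_of_ranks n r) i x y \<longleftrightarrow> x \<in> {1..n} \<and> y \<in> {1..n} \<and> r i x < r i y"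
  unfolding prefers_def profile_of_ranks_def by (auto dest: injD simp: order_le_less)

definition three_blocks :: "nat \<Rightarrow> nat \<Rightarrow> 'a \<Rightarrow> 'a \<Rightarrow> 'a \<Rightarrow> nat \<Rightarrow> 'a" where
  "three_blocks k m a b c i = (if i \<le> k then a else if i \<le> m then b else c)"

lemma votes_three_blocks:
  assumes "inj a" "inj b" "inj c" "k \<le> m" "m \<le> h" "x \<in> {1..n}" "y \<in> {1..n}"
  shows "votes h (profile_of_ranks n (three_blocks k m a b c)) x y =
    (if a x < a y then k else 0) + (if b x < b y then m - k else 0) + (if c x < c y then h - m else 0)"
proof -
  let ?A = "if a x < a y then {1..k} else {}" and ?B = "if b x < b y then {k<..m} else {}"
    and ?C = "if c x < c y then {m<..h} else {}"
  have "{i\<in>{1..h}. prefers (profile_of_ranks n (three_blocks k m a b c)) i x y} = ?A \<union> ?B \<union> ?C"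
    using assms by (auto simp: prefers_profile_of_ranks three_blocks_def)
  moreover have "card (?A \<union> ?B \<union> ?C) = card ?A + card ?B + card ?C"
    using assms(4,5) by (subst card_Un_disjoint; auto)+
  ultimately show ?thesis unfolding votes_def by simp
qed

text \<open>ballot_231 lists the alternatives in the order 2, 3, 1, 4, 5, \<dots>; similarly for the others.\<close>

definition ballot_231 :: "nat \<Rightarrow> nat" where
  "ballot_231 x = (if x = 1 then 3 else if x = 2 then 1 else if x = 3 then 2 else x)"

definition ballot_312 :: "nat \<Rightarrow> nat" where
  "ballot_312 x = (if x = 1 then 2 else if x = 2 then 3 else if x = 3 then 1 else x)"

definition ballot_4312 :: "nat \<Rightarrow> nat" where
  "ballot_4312 x = (if x = 1 then 3 else if x = 2 then 4 else if x = 3 then 2 else if x = 4 then 1 else x)"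

lemma inj_ballot_231: "inj ballot_231"
  unfolding inj_def ballot_231_def by auto

lemma inj_ballot_312: "inj ballot_312"
  unfolding inj_def ballot_312_def by auto

lemma inj_ballot_4312: "inj ballot_4312"
  unfolding inj_def ballot_4312_def by auto

lemma Minimax_ne_Copeland_even_voters:
  assumes n: "n \<ge> 3" and h: "even h" "h \<ge> 2"
  shows "\<exists>p\<in>profiles n h. Minimax n h p \<noteq> Copeland n h p"
proof -
  define k where "k = h div 2"
  define p where "p = profile_of_ranks n (three_blocks k k id id ballot_312)"
  have P: "p \<in> profiles n h"
    unfolding p_def by (rule profile_of_ranks_in_profiles) (simp add: three_blocks_def inj_ballot_312)
  have V: "votes h p x y = (if x < y then k else 0) + (if ballot_312 x < ballot_312 y then k else 0)"
    if "x \<in> {1..n}" "y \<in> {1..n}" for x y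
    using votes_three_blocks[OF inj_on_id inj_on_id inj_ballot_312 _ _ that, of k k h] h
    unfolding p_def k_def by auto
  have maj: "maj h p x y \<longleftrightarrow> k + 1 \<le> votes h p x y" for x y
    unfolding maj_def mu0_eq k_def ..
  have k: "k \<ge> 1" unfolding k_def using h by auto
  have "3 \<in> Minimax n h p"
  proof -
    have "minimax_score n h p 3 \<le> k"
      using n by (intro minimax_score_le) (auto simp: V ballot_312_def)
    moreover have "k \<le> minimax_score n h p z" if "z \<in> {1..n}" for z
      using that n by (intro minimax_score_ge[of "if z = 1 then 3 else 1"]) (auto simp: V ballot_312_def)
    ultimately show ?thesis unfolding Minimax_def using n by force
  qed
  moreover have "3 \<notin> Copeland n h p"
  proof -
    have "copeland_score n h p 3 \<le> int (card ({1..n} - {1, 2, 3})) - int (card ({} :: nat set))"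
      using n by (intro copeland_score_le) (auto simp: maj V ballot_312_def)
    moreover have "int (card ({1..n} - {1, 3})) - int (card ({} :: nat set)) \<le> copeland_score n h p 1"
      using k by (intro copeland_score_ge) (auto simp: maj V ballot_312_def)
    ultimately have "copeland_score n h p 3 < copeland_score n h p 1"
      using n by (simp add: card_Diff_subset)
    then show ?thesis unfolding Copeland_def using n by force
  qed
  ultimately show ?thesis using P by blast
qed

lemma Minimax_ne_Copeland_odd_voters:
  assumes n: "n \<ge> 3" and h: "odd h" "h \<ge> 5"
  shows "\<exists>p\<in>profiles n h. Minimax n h p \<noteq> Copeland n h p"
proof -
  define k where "k = h div 2"
  have hk: "k + 1 \<le> h" "h - (k + 1) = k" unfolding k_def using h by (auto elim: oddE)
  define p where "p = profile_of_ranks n (three_blocks k (k + 1) id ballot_231 ballot_312)"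
  have P: "p \<in> profiles n h"
    unfolding p_def by (rule profile_of_ranks_in_profiles)
      (simp add: three_blocks_def inj_ballot_231 inj_ballot_312)
  have V: "votes h p x y = (if x < y then k else 0) + (if ballot_231 x < ballot_231 y then 1 else 0)
      + (if ballot_312 x < ballot_312 y then k else 0)"
    if "x \<in> {1..n}" "y \<in> {1..n}" for x y
    using votes_three_blocks[OF inj_on_id inj_ballot_231 inj_ballot_312 _ _ that, of k "k + 1" h] hk
    unfolding p_def by simp
  have maj: "maj h p x y \<longleftrightarrow> k + 1 \<le> votes h p x y" for x y
    unfolding maj_def mu0_eq k_def ..
  have k: "k \<ge> 2" unfolding k_def using h by auto
  have "2 \<notin> Minimax n h p"
  proof -
    have "minimax_score n h p 1 \<le> k + 1"
      using n by (intro minimax_score_le) (auto simp: V ballot_231_def ballot_312_def split: if_splits)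
    moreover have "2 * k \<le> minimax_score n h p 2"
      using n by (intro minimax_score_ge[of 1]) (auto simp: V ballot_231_def ballot_312_def split: if_splits)
    ultimately show ?thesis unfolding Minimax_def using n k by force
  qed
  moreover have "2 \<in> Copeland n h p"
  proof -
    have "int (card ({1..n} - {1, 2})) - int (card {1 :: nat}) \<le> copeland_score n h p 2"
      using n by (intro copeland_score_ge) (auto simp: maj V ballot_231_def ballot_312_def split: if_splits)
    moreover have "copeland_score n h p z \<le> int (card ({1..n} - {z, b})) - int (card {b})"
      \<comment> \<open>b beats z\<close>
      if "z \<in> {1..n}" "z \<noteq> 2" "b = (if z = 1 then 3 else if z = 3 then 2 else 1)" for z b
      using n that
      by (intro copeland_score_le) (auto simp: maj V ballot_231_def ballot_312_def split: if_splits)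
    ultimately show ?thesis unfolding Copeland_def using n by force
  qed
  ultimately show ?thesis using P by blast
qed

lemma Minimax_ne_Copeland_three_voters:
  assumes n: "n \<ge> 4"
  shows "\<exists>p\<in>profiles n 3. Minimax n 3 p \<noteq> Copeland n 3 p"
proof -
  define p where "p = profile_of_ranks n (three_blocks 1 2 id ballot_231 ballot_4312)"
  have P: "p \<in> profiles n 3"
    unfolding p_def by (rule profile_of_ranks_in_profiles)
      (simp add: three_blocks_def inj_ballot_231 inj_ballot_4312)
  have V: "votes 3 p x y = (if x < y then 1 else 0) + (if ballot_231 x < ballot_231 y then 1 else 0)
      + (if ballot_4312 x < ballot_4312 y then 1 else 0)"
    if "x \<in> {1..n}" "y \<in> {1..n}" for x y
    using votes_three_blocks[OF inj_on_id inj_ballot_231 inj_ballot_4312 _ _ that, of 1 2 3]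
    unfolding p_def by simp
  have "mu0 3 = 2" by (simp add: mu0_eq)
  then have maj: "maj 3 p x y \<longleftrightarrow> 2 \<le> votes 3 p x y" for x y
    unfolding maj_def by simp
  have "4 \<in> Minimax n 3 p"
  proof -
    have "minimax_score n 3 p 4 \<le> 2"
      using n by (intro minimax_score_le) (auto simp: V ballot_231_def ballot_4312_def)
    moreover have "2 \<le> minimax_score n 3 p z" if "z \<in> {1..n}" for z
      using that n
      by (intro minimax_score_ge[of "if z = 1 then 3 else if z = 3 then 2 else 1"])
        (auto simp: V ballot_231_def ballot_4312_def)
    ultimately show ?thesis unfolding Minimax_def using n by force
  qed
  moreover have "4 \<notin> Copeland n 3 p"
  proof -
    have "copeland_score n 3 p 4 \<le> int (card ({1..n} - {1, 2, 3, 4})) - int (card {1 :: nat, 2, 3})"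
      using n by (intro copeland_score_le)
        (auto simp: maj V ballot_231_def ballot_4312_def split: if_splits)
    moreover have "int (card ({1..n} - {1, 3})) - int (card {3 :: nat}) \<le> copeland_score n 3 p 1"
      using n by (intro copeland_score_ge)
        (auto simp: maj V ballot_231_def ballot_4312_def split: if_splits)
    ultimately have "copeland_score n 3 p 4 < copeland_score n 3 p 1"
      using n by (simp add: card_Diff_subset)
    then show ?thesis unfolding Copeland_def using n by force
  qed
  ultimately show ?thesis using P by blast
qed

theorem corollary2:
  fixes n h :: nat
  assumes "n \<ge> 2" and "h \<ge> 2"
  shows "(\<forall>p\<in>profiles n h. Minimax n h p = Copeland n h p) \<longleftrightarrow> (n = 2 \<or> (h, n) = (3, 3))"
proof
  assume agree: "\<forall>p\<in>profiles n h. Minimax n h p = Copeland n h p"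
  show "n = 2 \<or> (h, n) = (3, 3)"
  proof (rule ccontr)
    assume other: "\<not> (n = 2 \<or> (h, n) = (3, 3))"
    then have n: "n \<ge> 3" using assms(1) by auto
    show False
    proof (cases "h = 3")
      case True
      with other n have "n \<ge> 4" by auto
      with agree True show False using Minimax_ne_Copeland_three_voters by blast
    next
      case False
      with assms(2) have "even h \<or> odd h \<and> h \<ge> 5" by presburger
      with agree n assms(2) show False
        using Minimax_ne_Copeland_even_voters Minimax_ne_Copeland_odd_voters by blast
    qed
  qed
next
  assume "n = 2 \<or> (h, n) = (3, 3)"
  then show "\<forall>p\<in>profiles n h. Minimax n h p = Copeland n h p"
    using Minimax_eq_Copeland_two_alternatives Minimax_eq_Copeland_three_voters_three_alternatives
    by auto
qed

end
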